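(* Let $K,H$ be finite dimensional Hilbert spaces and $\phi:B(K)\to B(H)$ a positive linear map, and let $k\ge1$. (i) Assume $\phi\neq0$, and let $\phi_{cp}:B(K)\to B(H)$ be the linear map with Choi matrix $C_{\phi_{cp}}=1-\|C_\phi^+\|^{-1}C_\phi$. Then $\phi$ is $k$-positive if and only if $\sup\{(C_{\phi_{cp}}x,x): x\in S(k),\ \|x\|=1\}\le 1$. (ii) Suppose $k<\min(\dim K,\dim H)$ and there exists a unit vector $y=\sum_{i=1}^k x_i\otimes y_i\in S(k)$ ($x_i\in K$, $y_i\in H$) such that $(C_\phi y, y)=0$ and $C_\phi y\notin X\otimes Y$, where $X=\mathrm{span}(x_i)$ and $Y=\mathrm{span}(y_i)$. Then $\phi$ is not $(k+1)$-positive.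
   Context: Fix matrix units $(e_{ij})$ for $B(K)$; the Choi matrix of $\phi$ is $C_\phi=\sum_{i,j}e_{ij}\otimes\phi(e_{ij})\in B(K\otimes H)$, self-adjoint for positive $\phi$, and $C_\phi^+$ denotes its positive part (in $C_\phi=C_\phi^+-C_\phi^-$ with $C_\phi^\pm\ge0$ of orthogonal supports). $S(k)$ (the Schmidt class) is the set of vectors in $K\otimes H$ of the form $\sum_{i=1}^k x_i\otimes y_i$ with $x_i\in K$, $y_i\in H$ (not necessarily all nonzero). A map $\phi$ is $k$-positive if $\phi\otimes\iota:B(K\otimes L)\to B(H\otimes L)$ is positive for a $k$-dimensional Hilbert space $L$. *)

theory Defs
  imports Complex_Main
begin

text \<open>Finite dimensional Hilbert spaces are modelled as coordinate spaces
  indexed by a finite type: K = complex^'k, H = complex^'h.  Vectors of a space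
  indexed by 'a are functions 'a => complex, operators are matrices
  'a => 'a => complex (A i j = entry in row i, column j).  The tensor product
  K (x) H is indexed by 'k * 'h.\<close>

definition mat_vec :: "('a::finite \<Rightarrow> 'a \<Rightarrow> complex) \<Rightarrow> ('a \<Rightarrow> complex) \<Rightarrow> ('a \<Rightarrow> complex)" where
  "mat_vec A v = (\<lambda>i. \<Sum>j\<in>UNIV. A i j * v j)"

text \<open>Inner product (u,v), linear in the first argument.\<close>
definition cinner :: "('a::finite \<Rightarrow> complex) \<Rightarrow> ('a \<Rightarrow> complex) \<Rightarrow> complex" where
  "cinner u v = (\<Sum>i\<in>UNIV. u i * cnj (v i))"

definition vnorm :: "('a::finite \<Rightarrow> complex) \<Rightarrow> real" where
  "vnorm v = sqrt (\<Sum>i\<in>UNIV. (cmod (v i))\<^sup>2)"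

definition psd :: "('a::finite \<Rightarrow> 'a \<Rightarrow> complex) \<Rightarrow> bool" where
  "psd A \<longleftrightarrow> (\<forall>v. Im (cinner (mat_vec A v) v) = 0 \<and> 0 \<le> Re (cinner (mat_vec A v) v))"

text \<open>Positivity of an operator on the subspace of vectors indexed by a set I
  (used for K (x) L with L = complex^k, indexed by 'k * {..<k}).\<close>
definition psd_on :: "'a set \<Rightarrow> ('a \<Rightarrow> 'a \<Rightarrow> complex) \<Rightarrow> bool" where
  "psd_on I A \<longleftrightarrow> (\<forall>v. let q = (\<Sum>i\<in>I. \<Sum>j\<in>I. A i j * v j * cnj (v i))
                         in Im q = 0 \<and> 0 \<le> Re q)"

definition clinear_map :: "(('a \<Rightarrow> 'a \<Rightarrow> complex) \<Rightarrow> ('b \<Rightarrow> 'b \<Rightarrow> complex)) \<Rightarrow> bool" where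
  "clinear_map \<phi> \<longleftrightarrow>
     (\<forall>A B. \<phi> (\<lambda>i j. A i j + B i j) = (\<lambda>a b. \<phi> A a b + \<phi> B a b)) \<and>
     (\<forall>c A. \<phi> (\<lambda>i j. c * A i j) = (\<lambda>a b. c * \<phi> A a b))"

definition positive_map :: "(('a::finite \<Rightarrow> 'a \<Rightarrow> complex) \<Rightarrow> ('b::finite \<Rightarrow> 'b \<Rightarrow> complex)) \<Rightarrow> bool" where
  "positive_map \<phi> \<longleftrightarrow> (\<forall>A. psd A \<longrightarrow> psd (\<phi> A))"

text \<open>phi (x) id on B(K (x) L), L = complex^k indexed by {..<k}:
  (phi (x) id)(sum a_pq (x) e_pq) = sum phi(a_pq) (x) e_pq.\<close>
definition tensor_id :: "(('a \<Rightarrow> 'a \<Rightarrow> complex) \<Rightarrow> ('b \<Rightarrow> 'b \<Rightarrow> complex))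
     \<Rightarrow> ('a \<times> nat \<Rightarrow> 'a \<times> nat \<Rightarrow> complex) \<Rightarrow> ('b \<times> nat \<Rightarrow> 'b \<times> nat \<Rightarrow> complex)" where
  "tensor_id \<phi> A = (\<lambda>(a, p) (b, q). \<phi> (\<lambda>i j. A (i, p) (j, q)) a b)"

definition k_positive :: "nat \<Rightarrow> (('a::finite \<Rightarrow> 'a \<Rightarrow> complex) \<Rightarrow> ('b::finite \<Rightarrow> 'b \<Rightarrow> complex)) \<Rightarrow> bool" where
  "k_positive k \<phi> \<longleftrightarrow>
     (\<forall>A. psd_on (UNIV \<times> {..<k}) A \<longrightarrow> psd_on (UNIV \<times> {..<k}) (tensor_id \<phi> A))"

definition mat_unit :: "'a \<Rightarrow> 'a \<Rightarrow> ('a \<Rightarrow> 'a \<Rightarrow> complex)" where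
  "mat_unit i j = (\<lambda>r s. if r = i \<and> s = j then 1 else 0)"

text \<open>Choi matrix C_phi = sum_ij e_ij (x) phi(e_ij) in B(K (x) H).\<close>
definition choi :: "(('a \<Rightarrow> 'a \<Rightarrow> complex) \<Rightarrow> ('b \<Rightarrow> 'b \<Rightarrow> complex)) \<Rightarrow> ('a \<times> 'b \<Rightarrow> 'a \<times> 'b \<Rightarrow> complex)" where
  "choi \<phi> = (\<lambda>(i, a) (j, b). \<phi> (mat_unit i j) a b)"

definition pos_part :: "('a::finite \<Rightarrow> 'a \<Rightarrow> complex) \<Rightarrow> ('a \<Rightarrow> 'a \<Rightarrow> complex)" where
  "pos_part C = (THE P. let N = (\<lambda>i j. P i j - C i j) in
       psd P \<and> psd N \<and> (\<forall>u v. cinner (mat_vec P u) (mat_vec N v) = 0))"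

definition opnorm :: "('a::finite \<Rightarrow> 'a \<Rightarrow> complex) \<Rightarrow> real" where
  "opnorm A = (SUP v\<in>{v. vnorm v = 1}. vnorm (mat_vec A v))"

definition choi_cp :: "(('a::finite \<Rightarrow> 'a \<Rightarrow> complex) \<Rightarrow> ('b::finite \<Rightarrow> 'b \<Rightarrow> complex)) \<Rightarrow> ('a \<times> 'b \<Rightarrow> 'a \<times> 'b \<Rightarrow> complex)" where
  "choi_cp \<phi> = (\<lambda>x y. (if x = y then 1 else 0)
       - complex_of_real (inverse (opnorm (pos_part (choi \<phi>)))) * choi \<phi> x y)"

definition schmidt :: "nat \<Rightarrow> ('a \<times> 'b \<Rightarrow> complex) set" where
  "schmidt k = {v. \<exists>(x :: nat \<Rightarrow> 'a \<Rightarrow> complex) (y :: nat \<Rightarrow> 'b \<Rightarrow> complex).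
                    v = (\<lambda>(a, b). \<Sum>i<k. x i a * y i b)}"

definition cspan :: "('a \<Rightarrow> complex) set \<Rightarrow> ('a \<Rightarrow> complex) set" where
  "cspan S = {v. \<exists>F c. finite F \<and> F \<subseteq> S \<and> v = (\<lambda>z. \<Sum>u\<in>F. c u * u z)}"

definition tensor_sub :: "('a \<Rightarrow> complex) set \<Rightarrow> ('b \<Rightarrow> complex) set \<Rightarrow> ('a \<times> 'b \<Rightarrow> complex) set" where
  "tensor_sub X Y = cspan {(\<lambda>(a, b). u a * w b) | u w. u \<in> X \<and> w \<in> Y}"

end

theory Submission
  imports Defs "HOL-Analysis.Analysis"
begin

text \<open>
  Both parts rest on the Choi characterisation of \<open>k\<close>-positivity: \<open>\<phi>\<close> is \<open>k\<close>-positive iff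
  \<open>(C\<^sub>\<phi> v, v) \<ge> 0\<close> for every \<open>v \<in> S(k)\<close>. Necessity is \<open>\<phi> \<otimes> id\<close> applied to the rank-one
  positive matrix built from the \<open>K\<close>-factors of \<open>v\<close>. Sufficiency writes
  \<open>((\<phi> \<otimes> id) A w, w)\<close> as the trace of \<open>A\<close> against a matrix whose quadratic form is the Choi form
  on Schmidt vectors, and uses that the trace of a product of positive matrices is nonnegative
  (by induction on the dimension, passing to a Schur complement).

  (i) For unit \<open>v\<close>, \<open>(C\<^sub>\<phi>\<^sub>c\<^sub>p v, v) = 1 - (C\<^sub>\<phi> v, v) / \<parallel>C\<^sub>\<phi>\<^sup>+\<parallel>\<close>, and \<open>C\<^sub>\<phi>\<^sup>+ \<noteq> 0\<close> because
  the diagonal of the Choi matrix of a positive map is nonnegative, so a nonzero positive map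
  cannot have a negative semidefinite Choi matrix. Hence the supremum is at most 1 iff the Choi form
  is nonnegative on \<open>S(k)\<close>. That \<open>C\<^sup>+\<close> is well defined (existence and uniqueness of the Jordan
  decomposition) comes from a spectral theorem, proved by repeatedly maximising the quadratic form
  on the unit sphere of the orthogonal complement of the eigenvectors found so far.

  (ii) If \<open>(C\<^sub>\<phi> y, y) = 0\<close> with \<open>y \<in> S(k)\<close>, then \<open>y + t e \<in> S(k + 1)\<close> for every product vector
  \<open>e\<close>, so \<open>(k + 1)\<close>-positivity makes \<open>2 Re (cnj t (C\<^sub>\<phi> y, e)) + |t|\<^sup>2 (C\<^sub>\<phi> e, e)\<close> nonnegative for all
  \<open>t\<close>; thus \<open>C\<^sub>\<phi> y = 0\<close>, which lies in \<open>X \<otimes> Y\<close>.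
\<close>

section \<open>Quadratic forms and positive matrices\<close>

lemma nonneg_affine_imp_zero:
  fixes a b :: real
  assumes "\<And>t. 0 \<le> b + t * a"
  shows "a = 0"
proof (rule ccontr)
  assume "a \<noteq> 0"
  then have "b + (- (\<bar>b\<bar> + 1) / a) * a < 0" by simp
  with assms show False by (meson not_le)
qed

lemma nonneg_quadratic_imp_linear_zero:
  fixes a b :: real
  assumes "\<And>t. 0 \<le> t * a + t\<^sup>2 * b"
  shows "a = 0"
proof (rule ccontr)
  assume a: "a \<noteq> 0"
  define t where "t = - a / (\<bar>b\<bar> + 1)"
  have "t * a + t\<^sup>2 * b \<le> t * a + t\<^sup>2 * \<bar>b\<bar>" by (simp add: mult_left_mono)
  also have "\<dots> = t * (a + t * \<bar>b\<bar>)" by (simp add: algebra_simps power2_eq_square)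
  also have "\<dots> = - (a / (\<bar>b\<bar> + 1))\<^sup>2" unfolding t_def by (simp add: field_simps power2_eq_square)
  also have "\<dots> < 0" using a by simp
  finally show False using assms[of t] by simp
qed

definition sform :: "'a set \<Rightarrow> ('a \<Rightarrow> 'a \<Rightarrow> complex) \<Rightarrow> ('a \<Rightarrow> complex) \<Rightarrow> ('a \<Rightarrow> complex) \<Rightarrow> complex" where
  "sform I A u w = (\<Sum>i\<in>I. \<Sum>j\<in>I. A i j * u j * cnj (w i))"

abbreviation qform :: "'a set \<Rightarrow> ('a \<Rightarrow> 'a \<Rightarrow> complex) \<Rightarrow> ('a \<Rightarrow> complex) \<Rightarrow> complex" where
  "qform I A v \<equiv> sform I A v v"

definition unit_vec :: "'a \<Rightarrow> 'a \<Rightarrow> complex" where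
  "unit_vec i = (\<lambda>x. if x = i then 1 else 0)"

definition herm_on :: "'a set \<Rightarrow> ('a \<Rightarrow> 'a \<Rightarrow> complex) \<Rightarrow> bool" where
  "herm_on I A \<longleftrightarrow> (\<forall>i\<in>I. \<forall>j\<in>I. A j i = cnj (A i j))"

lemma psd_on_iff_qform: "psd_on I A \<longleftrightarrow> (\<forall>v. Im (qform I A v) = 0 \<and> 0 \<le> Re (qform I A v))"
  unfolding psd_on_def sform_def Let_def by simp

lemma cinner_mat_vec_eq_sform: "cinner (mat_vec A u) w = sform UNIV A u w"
  unfolding cinner_def mat_vec_def sform_def by (simp add: sum_distrib_right mult.assoc)

lemma psd_iff_psd_on_UNIV: "psd A \<longleftrightarrow> psd_on UNIV A"
  unfolding psd_def psd_on_iff_qform cinner_mat_vec_eq_sform by simp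

lemma sform_add_left: "sform I A (\<lambda>z. u z + u' z) w = sform I A u w + sform I A u' w"
  unfolding sform_def by (simp add: algebra_simps sum.distrib)

lemma sform_add_right: "sform I A u (\<lambda>z. w z + w' z) = sform I A u w + sform I A u w'"
  unfolding sform_def by (simp add: algebra_simps sum.distrib)

lemma sform_scale_left: "sform I A (\<lambda>z. c * u z) w = c * sform I A u w"
  unfolding sform_def by (simp add: algebra_simps sum_distrib_left)

lemma sform_scale_right: "sform I A u (\<lambda>z. c * w z) = cnj c * sform I A u w"
  unfolding sform_def by (simp add: algebra_simps sum_distrib_left)

lemma cnj_unit_vec [simp]: "cnj (unit_vec i x) = unit_vec i x"
  by (simp add: unit_vec_def)

lemma sum_mult_unit_vec: "finite I \<Longrightarrow> i \<in> I \<Longrightarrow> (\<Sum>j\<in>I. f j * unit_vec i j) = f i"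
  by (simp add: unit_vec_def if_distrib cong: if_cong)

lemma sform_unit_vec_left:
  assumes "finite I" "j \<in> I"
  shows "sform I A (unit_vec j) w = (\<Sum>i\<in>I. A i j * cnj (w i))"
  unfolding sform_def
proof (intro sum.cong refl)
  fix i
  show "(\<Sum>k\<in>I. A i k * unit_vec j k * cnj (w i)) = A i j * cnj (w i)"
    using sum_mult_unit_vec[OF assms, of "\<lambda>k. A i k * cnj (w i)"] by (simp add: mult_ac)
qed

lemma sform_unit_vec_right:
  assumes "finite I" "i \<in> I"
  shows "sform I A u (unit_vec i) = (\<Sum>j\<in>I. A i j * u j)"
  unfolding sform_def sum_distrib_right[symmetric] by (simp add: sum_mult_unit_vec[OF assms])

lemma sform_unit_vecs:
  "finite I \<Longrightarrow> i \<in> I \<Longrightarrow> j \<in> I \<Longrightarrow> sform I A (unit_vec j) (unit_vec i) = A i j"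
  by (simp add: sform_unit_vec_right sum_mult_unit_vec)

lemma sform_swap_adjoint: "sform I (\<lambda>i j. cnj (A j i)) u w = cnj (sform I A w u)"
  unfolding sform_def by (subst sum.swap) (simp add: mult_ac)

lemma sform_diff_matrix: "sform I (\<lambda>i j. A i j - B i j) u w = sform I A u w - sform I B u w"
  unfolding sform_def by (simp add: algebra_simps sum_subtractf)

lemma qform_add_scaled:
  fixes u w :: "'a \<Rightarrow> complex"
  shows "qform I A (\<lambda>z. u z + c * w z) =
     qform I A u + c * sform I A w u + cnj c * sform I A u w + c * cnj c * qform I A w"
  by (simp add: sform_add_left sform_add_right sform_scale_left sform_scale_right algebra_simps)

lemma sform_outer: "sform I (\<lambda>i j. p i * q j) u w = (\<Sum>j\<in>I. q j * u j) * (\<Sum>i\<in>I. p i * cnj (w i))"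
  unfolding sform_def sum_product by (subst sum.swap) (simp add: mult_ac)

lemma psd_on_outer: "psd_on I (\<lambda>i j. f i * cnj (f j))"
  unfolding psd_on_iff_qform sform_outer
proof
  fix v
  define z where "z = (\<Sum>i\<in>I. f i * cnj (v i))"
  have "(\<Sum>j\<in>I. cnj (f j) * v j) * z = of_real ((cmod z)\<^sup>2)"
    unfolding complex_norm_square z_def by (simp add: cnj_sum mult.commute)
  then show "Im ((\<Sum>j\<in>I. cnj (f j) * v j) * z) = 0 \<and> 0 \<le> Re ((\<Sum>j\<in>I. cnj (f j) * v j) * z)"
    by simp
qed

lemma matrix_eq_0_if_qform_eq_0:
  assumes I: "finite I" "i \<in> I" "j \<in> I" and q: "\<And>v. qform I A v = 0"
  shows "A i j = 0"
proof -
  have diag: "A k k = 0" if "k \<in> I" for k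
    using q[of "unit_vec k"] sform_unit_vecs[OF I(1) that that] by simp
  have "c * A j i + cnj c * A i j = 0" for c
    using q[of "\<lambda>z. unit_vec j z + c * unit_vec i z"]
    unfolding qform_add_scaled by (simp add: sform_unit_vecs I diag)
  from this[of 1] this[of \<i>] show ?thesis by (simp add: algebra_simps)
qed

lemma herm_on_if_qform_real:
  assumes "finite I" and real: "\<And>v. Im (qform I A v) = 0"
  shows "herm_on I A"
  unfolding herm_on_def
proof (intro ballI)
  fix i j assume "i \<in> I" "j \<in> I"
  have "qform I (\<lambda>i j. A i j - cnj (A j i)) v = 0" for v
    unfolding sform_diff_matrix sform_swap_adjoint using real[of v] by (simp add: complex_eq_iff)
  from matrix_eq_0_if_qform_eq_0[OF assms(1) \<open>j \<in> I\<close> \<open>i \<in> I\<close> this]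
  show "A j i = cnj (A i j)" by simp
qed

lemma psd_on_imp_herm_on: "finite I \<Longrightarrow> psd_on I A \<Longrightarrow> herm_on I A"
  by (rule herm_on_if_qform_real) (simp_all add: psd_on_iff_qform)

lemma psd_imp_herm_on: "psd (A :: 'a::finite \<Rightarrow> 'a \<Rightarrow> complex) \<Longrightarrow> herm_on UNIV A"
  by (simp add: psd_iff_psd_on_UNIV psd_on_imp_herm_on)

lemma herm_on_diff:
  assumes "herm_on I A" "herm_on I B"
  shows "herm_on I (\<lambda>i j. A i j - B i j)"
  unfolding herm_on_def
proof (intro ballI)
  fix i j assume "i \<in> I" "j \<in> I"
  then have "A j i = cnj (A i j)" "B j i = cnj (B i j)" using assms unfolding herm_on_def by blast+
  then show "A j i - B j i = cnj (A i j - B i j)" by simp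
qed

lemma herm_on_cnj: "herm_on I A \<Longrightarrow> i \<in> I \<Longrightarrow> j \<in> I \<Longrightarrow> cnj (A i j) = A j i"
  unfolding herm_on_def by (metis complex_cnj_cnj)

lemma psd_on_subset:
  assumes "finite I" "F \<subseteq> I" "psd_on I A"
  shows "psd_on F A"
  unfolding psd_on_iff_qform
proof
  fix v
  define w where "w = (\<lambda>z. if z \<in> F then v z else (0::complex))"
  have "qform I A w = qform F A v"
    unfolding sform_def w_def using assms(1,2) by (auto intro!: sum.mono_neutral_cong_right)
  then show "Im (qform F A v) = 0 \<and> 0 \<le> Re (qform F A v)"
    using assms(3) unfolding psd_on_iff_qform by metis
qed

lemma psd_on_diag:
  assumes "finite I" "x \<in> I" "psd_on I A"
  shows "Im (A x x) = 0" "0 \<le> Re (A x x)"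
  using assms(3) sform_unit_vecs[OF assms(1,2,2), of A] unfolding psd_on_iff_qform by metis+

lemma psd_on_zero_diag:
  assumes I: "finite I" "x \<in> I" "j \<in> I" and A: "psd_on I A" "A x x = 0"
  shows "A j x = 0" "A x j = 0"
proof -
  have herm: "A x j = cnj (A j x)"
    using psd_on_imp_herm_on[OF I(1) A(1)] I unfolding herm_on_def by blast
  define a where "a = A j x"
  have "0 \<le> Re (A j j) + t * ((Re a)\<^sup>2 + (Im a)\<^sup>2)" for t
  proof -
    define c where "c = of_real (t / 2) * cnj a"
    have "0 \<le> Re (qform I A (\<lambda>z. unit_vec j z + c * unit_vec x z))"
      using A(1) unfolding psd_on_iff_qform by blast
    also have "qform I A (\<lambda>z. unit_vec j z + c * unit_vec x z) = A j j + c * a + cnj (c * a)"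
      unfolding qform_add_scaled using I A(2) herm by (simp add: sform_unit_vecs a_def)
    finally show ?thesis unfolding c_def by (simp add: algebra_simps power2_eq_square)
  qed
  then have "(Re a)\<^sup>2 + (Im a)\<^sup>2 = 0" by (rule nonneg_affine_imp_zero)
  then have "a = 0" by (simp add: complex_eq_iff sum_power2_eq_zero_iff)
  then show "A j x = 0" "A x j = 0" using herm by (simp_all add: a_def)
qed

section \<open>Traces of products of positive matrices\<close>

definition trace_prod :: "'a set \<Rightarrow> ('a \<Rightarrow> 'a \<Rightarrow> complex) \<Rightarrow> ('a \<Rightarrow> 'a \<Rightarrow> complex) \<Rightarrow> complex" where
  "trace_prod I A B = (\<Sum>i\<in>I. \<Sum>j\<in>I. A i j * B j i)"

lemma trace_prod_diff_left:
  "trace_prod I (\<lambda>i j. A i j - A' i j) B = trace_prod I A B - trace_prod I A' B"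
  unfolding trace_prod_def by (simp add: left_diff_distrib sum_subtractf)

lemma trace_prod_diff_right:
  "trace_prod I A (\<lambda>i j. B i j - B' i j) = trace_prod I A B - trace_prod I A B'"
  unfolding trace_prod_def by (simp add: right_diff_distrib sum_subtractf)

lemma trace_prod_insert_zero:
  assumes "finite F" "x \<notin> F" "\<forall>j\<in>insert x F. A x j = 0 \<and> A j x = 0"
  shows "trace_prod (insert x F) A B = trace_prod F A B"
  using assms unfolding trace_prod_def by (simp add: sum.distrib)

lemma psd_on_schur_complement:
  assumes I: "finite I" "x \<in> I" and A: "psd_on I A" "A x x \<noteq> 0"
  shows "psd_on I (\<lambda>i j. A i j - A i x / A x x * A x j)"
  unfolding psd_on_iff_qform
proof
  fix v
  define a where "a = A x x"
  define r where "r = Re a"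
  have r: "a = of_real r" "r > 0"
    using psd_on_diag[OF I A(1)] A(2) unfolding r_def a_def by (auto simp: complex_eq_iff)
  have herm: "A i x = cnj (A x i)" if "i \<in> I" for i
    using psd_on_imp_herm_on[OF I(1) A(1)] that I(2) unfolding herm_on_def by blast
  define g where "g = (\<Sum>j\<in>I. A x j * v j)"
  have sum_cnj_g: "(\<Sum>i\<in>I. A i x * cnj (v i)) = cnj g"
    unfolding g_def cnj_sum by (simp add: herm)
  define c where "c = - g / a"
  have "qform I (\<lambda>i j. A i j - A i x / A x x * A x j) v = qform I A v - g * cnj g / a"
    unfolding sform_diff_matrix sform_outer a_def[symmetric] g_def[symmetric]
    by (simp add: sum_divide_distrib[symmetric] times_divide_eq_left sum_cnj_g)
  also have "\<dots> = qform I A (\<lambda>z. v z + c * unit_vec x z)"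
  proof -
    have "sform I A (unit_vec x) v = cnj g" "sform I A v (unit_vec x) = g" "qform I A (unit_vec x) = a"
      using I by (simp_all add: sform_unit_vec_left sform_unit_vec_right sum_mult_unit_vec sum_cnj_g
          a_def g_def)
    then show ?thesis unfolding qform_add_scaled c_def r by (simp add: field_simps)
  qed
  finally show "Im (qform I (\<lambda>i j. A i j - A i x / A x x * A x j) v) = 0 \<and>
      0 \<le> Re (qform I (\<lambda>i j. A i j - A i x / A x x * A x j) v)"
    using A(1) unfolding psd_on_iff_qform by metis
qed

lemma trace_prod_schur_split:
  assumes "finite I" "x \<in> I" "\<forall>i\<in>I. A i x = cnj (A x i)"
  shows "trace_prod I A B =
    trace_prod I (\<lambda>i j. A i j - A i x / A x x * A x j) B + qform I B (\<lambda>i. A i x) / A x x"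
proof -
  have "qform I B (\<lambda>i. A i x) = (\<Sum>i\<in>I. \<Sum>j\<in>I. A i x * A x j * B j i)"
    unfolding sform_def using assms(3) by (subst sum.swap) (simp add: mult_ac)
  then show ?thesis
    unfolding trace_prod_diff_left
    by (simp add: trace_prod_def sum_divide_distrib mult_ac)
qed

lemma trace_prod_psd_on:
  assumes "finite I" "psd_on I A" "psd_on I B"
  shows "Im (trace_prod I A B) = 0 \<and> 0 \<le> Re (trace_prod I A B)"
  using assms
proof (induction I arbitrary: A B rule: finite_induct)
  case empty
  then show ?case by (simp add: trace_prod_def)
next
  case (insert x F)
  let ?I = "insert x F"
  have fin: "finite ?I" "x \<in> ?I" "F \<subseteq> ?I" using insert(1) by auto
  have B: "psd_on F B" by (rule psd_on_subset[OF fin(1,3) insert(5)])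
  show ?case
  proof (cases "A x x = 0")
    case True
    then have "trace_prod ?I A B = trace_prod F A B"
      using psd_on_zero_diag[OF fin(1,2) _ insert(4)] by (intro trace_prod_insert_zero[OF insert(1,2)]) blast
    then show ?thesis using insert.IH[OF psd_on_subset[OF fin(1,3) insert(4)] B] by simp
  next
    case False
    define S where "S = (\<lambda>i j. A i j - A i x / A x x * A x j)"
    have S: "psd_on ?I S" unfolding S_def by (rule psd_on_schur_complement[OF fin(1,2) insert(4) False])
    have "trace_prod ?I S B = trace_prod F S B"
      by (rule trace_prod_insert_zero[OF insert(1,2)]) (simp add: S_def False)
    moreover have "trace_prod ?I A B = trace_prod ?I S B + qform ?I B (\<lambda>i. A i x) / A x x"
      unfolding S_def using psd_on_imp_herm_on[OF fin(1) insert(4)] fin(2) unfolding herm_on_def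
      by (intro trace_prod_schur_split[OF fin(1,2)]) blast
    moreover have "Im (trace_prod F S B) = 0 \<and> 0 \<le> Re (trace_prod F S B)"
      by (rule insert.IH[OF psd_on_subset[OF fin(1,3) S] B])
    moreover have "Im (A x x) = 0" "0 \<le> Re (A x x)" by (rule psd_on_diag[OF fin(1,2) insert(4)])+
    moreover have "Im (qform ?I B (\<lambda>i. A i x)) = 0" "0 \<le> Re (qform ?I B (\<lambda>i. A i x))"
      using insert(5) unfolding psd_on_iff_qform by auto
    ultimately show ?thesis by (simp add: Im_divide Re_divide)
  qed
qed

section \<open>The spectral theorem\<close>

lemma cinner_cnj: "cnj (cinner u w) = cinner w u"
  unfolding cinner_def by (simp add: mult.commute)

lemma cinner_add_left: "cinner (\<lambda>i. u i + u' i) w = cinner u w + cinner u' w"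
  unfolding cinner_def by (simp add: ring_distribs sum.distrib)

lemma cinner_add_right: "cinner u (\<lambda>i. w i + w' i) = cinner u w + cinner u w'"
  unfolding cinner_def by (simp add: ring_distribs sum.distrib)

lemma cinner_diff_left: "cinner (\<lambda>i. u i - u' i) w = cinner u w - cinner u' w"
  unfolding cinner_def by (simp add: ring_distribs sum_subtractf)

lemma cinner_diff_right: "cinner u (\<lambda>i. w i - w' i) = cinner u w - cinner u w'"
  unfolding cinner_def by (simp add: ring_distribs sum_subtractf)

lemma cinner_scale_left: "cinner (\<lambda>i. c * u i) w = c * cinner u w"
  unfolding cinner_def by (simp add: sum_distrib_left mult.assoc)

lemma cinner_scale_right: "cinner u (\<lambda>i. c * w i) = cnj c * cinner u w"
  unfolding cinner_def by (simp add: sum_distrib_left mult_ac)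

lemma cinner_sum_left: "cinner (\<lambda>i. \<Sum>k\<in>K. c k * u k i) w = (\<Sum>k\<in>K. c k * cinner (u k) w)"
  unfolding cinner_def by (simp add: sum_distrib_left sum_distrib_right mult_ac) (rule sum.swap)

lemma cinner_sum_right: "cinner u (\<lambda>i. \<Sum>k\<in>K. c k * w k i) = (\<Sum>k\<in>K. cnj (c k) * cinner u (w k))"
  unfolding cinner_def by (simp add: sum_distrib_left sum_distrib_right mult_ac cnj_sum) (rule sum.swap)

lemma cinner_unit_vec_right: "cinner u (unit_vec i) = u i"
  unfolding cinner_def unit_vec_def by (simp add: if_distrib cong: if_cong)

lemma cinner_self: "cinner u u = of_real (\<Sum>i\<in>UNIV. (cmod (u i))\<^sup>2)"
  unfolding cinner_def of_real_sum by (rule sum.cong[OF refl]) (simp add: complex_norm_square[symmetric])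

lemma cinner_self_eq_0_iff:
  fixes u :: "'a::finite \<Rightarrow> complex"
  shows "cinner u u = 0 \<longleftrightarrow> u = (\<lambda>i. 0)"
  unfolding cinner_self of_real_eq_0_iff by (auto simp: sum_nonneg_eq_0_iff fun_eq_iff)

lemma vnorm_eq_sqrt_cinner: "vnorm u = sqrt (Re (cinner u u))"
  unfolding vnorm_def cinner_self by simp

lemma vnorm_eq_1_iff: "vnorm u = 1 \<longleftrightarrow> cinner u u = 1"
  unfolding vnorm_eq_sqrt_cinner by (simp add: cinner_self complex_eq_iff)

lemma nonzero_unit_multiple:
  fixes u :: "'a::finite \<Rightarrow> complex"
  assumes "u \<noteq> (\<lambda>i. 0)"
  obtains r where "r > 0" "cinner (\<lambda>i. of_real r * u i) (\<lambda>i. of_real r * u i) = 1"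
proof -
  define s where "s = Re (cinner u u)"
  have "cinner u u = of_real s" "0 \<le> s" unfolding s_def cinner_self by (simp_all add: sum_nonneg)
  moreover have "cinner u u \<noteq> 0" using assms cinner_self_eq_0_iff by blast
  ultimately have s: "cinner u u = of_real s" "s > 0" by auto
  have "cinner (\<lambda>i. of_real (1 / sqrt s) * u i) (\<lambda>i. of_real (1 / sqrt s) * u i)
      = of_real (1 / sqrt s * (1 / sqrt s) * s)"
    unfolding cinner_scale_left cinner_scale_right s(1) by (simp flip: of_real_mult)
  also have "\<dots> = 1" using s(2) by simp
  finally show ?thesis using s(2) by (intro that[of "1 / sqrt s"]) auto
qed

lemma mat_vec_self_adjoint:
  fixes C :: "'a::finite \<Rightarrow> 'a \<Rightarrow> complex"
  assumes "herm_on UNIV C"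
  shows "cinner (mat_vec C u) w = cinner u (mat_vec C w)"
proof -
  have "cinner u (mat_vec C w) = cnj (sform UNIV C w u)"
    unfolding cinner_mat_vec_eq_sform[symmetric] cinner_cnj ..
  also have "\<dots> = sform UNIV (\<lambda>i j. cnj (C j i)) u w" by (rule sform_swap_adjoint[symmetric])
  also have "(\<lambda>i j. cnj (C j i)) = C"
    using herm_on_cnj[OF assms] by (intro ext) simp
  finally show ?thesis unfolding cinner_mat_vec_eq_sform by (rule sym)
qed

lemma qform_real_if_herm:
  fixes C :: "'a::finite \<Rightarrow> 'a \<Rightarrow> complex"
  assumes "herm_on UNIV C"
  shows "Im (qform UNIV C u) = 0"
proof -
  have "cnj (qform UNIV C u) = qform UNIV C u"
    using mat_vec_self_adjoint[OF assms, of u u] cinner_cnj[of "mat_vec C u" u]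
    unfolding cinner_mat_vec_eq_sform by simp
  then show ?thesis by (simp add: complex_eq_iff)
qed

definition orthonormal :: "(nat \<Rightarrow> 'a::finite \<Rightarrow> complex) \<Rightarrow> nat \<Rightarrow> bool" where
  "orthonormal v m \<longleftrightarrow> (\<forall>k<m. \<forall>l<m. cinner (v k) (v l) = (if k = l then 1 else 0))"

definition compl_proj :: "(nat \<Rightarrow> 'a \<Rightarrow> complex) \<Rightarrow> nat \<Rightarrow> 'a \<Rightarrow> 'a \<Rightarrow> complex" where
  "compl_proj v m i j = unit_vec j i - (\<Sum>k<m. cnj (v k j) * v k i)"

lemma compl_proj_col_orth:
  assumes "orthonormal v m" "l < m"
  shows "cinner (\<lambda>i. compl_proj v m i j) (v l) = 0"
proof -
  have "(\<Sum>k<m. cnj (v k j) * cinner (v k) (v l)) = (\<Sum>k<m. if k = l then cnj (v l j) else 0)"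
    using assms unfolding orthonormal_def by (intro sum.cong refl) auto
  moreover have "cinner (unit_vec j) (v l) = cnj (v l j)"
    by (metis cinner_cnj cinner_unit_vec_right)
  ultimately show ?thesis
    unfolding compl_proj_def cinner_diff_left cinner_sum_left using assms(2) by simp
qed

lemma compl_proj_col_self:
  assumes "orthonormal v m"
  shows "cinner (\<lambda>i. compl_proj v m i j) (\<lambda>i. compl_proj v m i j) = compl_proj v m j j"
proof -
  have "cinner (\<lambda>i. compl_proj v m i j) (\<lambda>i. compl_proj v m i j) =
     cinner (\<lambda>i. compl_proj v m i j) (unit_vec j)
       - (\<Sum>k<m. cnj (cnj (v k j)) * cinner (\<lambda>i. compl_proj v m i j) (v k))"
    unfolding compl_proj_def[of v m _ j] cinner_diff_right cinner_sum_right ..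
  then show ?thesis using compl_proj_col_orth[OF assms] by (simp add: cinner_unit_vec_right)
qed

lemma compl_proj_trace:
  fixes v :: "nat \<Rightarrow> 'a::finite \<Rightarrow> complex"
  assumes "orthonormal v m"
  shows "(\<Sum>i\<in>UNIV. compl_proj v m i i) = of_nat CARD('a) - of_nat m"
proof -
  have "(\<Sum>i\<in>UNIV. \<Sum>k<m. cnj (v k i) * v k i) = (\<Sum>k<m. cinner (v k) (v k))"
    unfolding cinner_def by (subst sum.swap) (simp add: mult.commute)
  also have "\<dots> = of_nat m" using assms unfolding orthonormal_def by simp
  finally show ?thesis unfolding compl_proj_def by (simp add: sum_subtractf unit_vec_def)
qed

lemma orthonormal_extend_exists:
  fixes v :: "nat \<Rightarrow> 'a::finite \<Rightarrow> complex"
  assumes on: "orthonormal v m" and lt: "m < CARD('a)"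
  shows "\<exists>u. cinner u u = 1 \<and> (\<forall>k<m. cinner u (v k) = 0)"
proof -
  have "(\<Sum>i\<in>UNIV. compl_proj v m i i) \<noteq> 0" unfolding compl_proj_trace[OF on] using lt by simp
  then obtain j where "compl_proj v m j j \<noteq> 0" by (meson sum.neutral)
  then have "(\<lambda>i. compl_proj v m i j) \<noteq> (\<lambda>i. 0)"
    using compl_proj_col_self[OF on, of j] cinner_self_eq_0_iff[of "\<lambda>i. compl_proj v m i j"] by auto
  then obtain r where "cinner (\<lambda>i. of_real r * compl_proj v m i j) (\<lambda>i. of_real r * compl_proj v m i j) = 1"
    by (rule nonzero_unit_multiple)
  moreover have "cinner (\<lambda>i. of_real r * compl_proj v m i j) (v k) = 0" if "k < m" for k
    unfolding cinner_scale_left using compl_proj_col_orth[OF on that] by simp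
  ultimately show ?thesis by blast
qed

lemma orthonormal_complete:
  fixes v :: "nat \<Rightarrow> 'a::finite \<Rightarrow> complex"
  assumes on: "orthonormal v CARD('a)"
  shows "(\<Sum>k<CARD('a). cnj (v k j) * v k i) = unit_vec j i"
proof -
  let ?P = "compl_proj v CARD('a)"
  have "(\<Sum>i\<in>UNIV. Re (cinner (\<lambda>l. ?P l i) (\<lambda>l. ?P l i))) = 0"
    using arg_cong[OF compl_proj_trace[OF on], of Re] unfolding compl_proj_col_self[OF on] by simp
  then have "Re (cinner (\<lambda>l. ?P l j) (\<lambda>l. ?P l j)) = 0"
    by (subst (asm) sum_nonneg_eq_0_iff) (auto simp: cinner_self sum_nonneg)
  then have "cinner (\<lambda>l. ?P l j) (\<lambda>l. ?P l j) = 0" by (simp add: cinner_self)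
  then have "?P i j = 0" using cinner_self_eq_0_iff by (metis (mono_tags))
  then show ?thesis unfolding compl_proj_def by simp
qed

lemma qform_max_on_orth_compl_exists:
  fixes C :: "'a::finite \<Rightarrow> 'a \<Rightarrow> complex" and v :: "nat \<Rightarrow> 'a \<Rightarrow> complex"
  assumes "\<exists>u. cinner u u = 1 \<and> (\<forall>k<m. cinner u (v k) = 0)"
  shows "\<exists>x. (cinner x x = 1 \<and> (\<forall>k<m. cinner x (v k) = 0)) \<and>
     (\<forall>y. cinner y y = 1 \<and> (\<forall>k<m. cinner y (v k) = 0) \<longrightarrow>
          Re (qform UNIV C y) \<le> Re (qform UNIV C x))"
proof -
  define S where "S = {z :: complex^'a. cinner (vec_nth z) (vec_nth z) = 1} \<inter>
     (\<Inter>k\<in>{..<m}. {z. cinner (vec_nth z) (v k) = 0})"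
  have vec_nth_lambda: "vec_nth (vec_lambda y) = y" for y :: "'a \<Rightarrow> complex" by (rule ext) simp
  have memS: "vec_lambda y \<in> S \<longleftrightarrow> cinner y y = 1 \<and> (\<forall>k<m. cinner y (v k) = 0)" for y
    unfolding S_def by (auto simp: vec_nth_lambda)
  have "closed S" unfolding S_def cinner_def
    by (intro closed_Int closed_INT ballI closed_Collect_eq continuous_intros
        continuous_on_component continuous_on_id)
  moreover have "bounded S"
  proof -
    have "norm z = sqrt (Re (cinner (vec_nth z) (vec_nth z)))" for z :: "complex^'a"
      unfolding norm_vec_def L2_set_def vnorm_eq_sqrt_cinner[symmetric] vnorm_def ..
    then show ?thesis unfolding bounded_iff S_def by (intro exI[of _ 1]) auto
  qed
  ultimately have "compact S" by (simp add: compact_eq_bounded_closed)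
  moreover have "S \<noteq> {}" using assms memS by blast
  moreover have "continuous_on S (\<lambda>z. Re (qform UNIV C (vec_nth z)))"
    unfolding sform_def by (intro continuous_intros continuous_on_component continuous_on_id)
  ultimately obtain z where z: "z \<in> S"
    and z_max: "\<forall>y\<in>S. Re (qform UNIV C (vec_nth y)) \<le> Re (qform UNIV C (vec_nth z))"
    using continuous_attains_sup by blast
  have "cinner (vec_nth z) (vec_nth z) = 1 \<and> (\<forall>k<m. cinner (vec_nth z) (v k) = 0)"
    using z memS[of "vec_nth z"] by (simp add: vec_lambda_eta)
  moreover have "Re (qform UNIV C y) \<le> Re (qform UNIV C (vec_nth z))"
    if "cinner y y = 1 \<and> (\<forall>k<m. cinner y (v k) = 0)" for y
    using z_max memS[of y] vec_nth_lambda[of y] that by force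
  ultimately show ?thesis by (intro exI[of _ "vec_nth z"]) simp
qed

context
  fixes C :: "'a::finite \<Rightarrow> 'a \<Rightarrow> complex" and v :: "nat \<Rightarrow> 'a \<Rightarrow> complex" and m :: nat
    and lam :: "nat \<Rightarrow> real" and x :: "'a \<Rightarrow> complex"
  assumes herm: "herm_on UNIV C"
    and eig: "\<forall>k<m. mat_vec C (v k) = (\<lambda>i. of_real (lam k) * v k i)"
    and x_unit: "cinner x x = 1" and x_orth: "\<forall>k<m. cinner x (v k) = 0"
    and x_max: "\<forall>y. cinner y y = 1 \<and> (\<forall>k<m. cinner y (v k) = 0) \<longrightarrow>
          Re (qform UNIV C y) \<le> Re (qform UNIV C x)"
begin

private lemma qform_le_max:
  assumes "\<forall>k<m. cinner y (v k) = 0"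
  shows "Re (qform UNIV C y) \<le> Re (qform UNIV C x) * Re (cinner y y)"
proof (cases "y = (\<lambda>i. 0)")
  case True
  then show ?thesis by (simp add: sform_def cinner_def)
next
  case False
  then obtain r where r: "r > 0" "cinner (\<lambda>i. of_real r * y i) (\<lambda>i. of_real r * y i) = 1"
    by (rule nonzero_unit_multiple)
  then have "of_real (r\<^sup>2) * cinner y y = 1"
    unfolding cinner_scale_left cinner_scale_right by (simp add: power2_eq_square mult.assoc)
  from arg_cong[where f=Re, OF this] have norm: "r\<^sup>2 * Re (cinner y y) = 1" by simp
  have "Re (qform UNIV C y) = (r\<^sup>2 * Re (qform UNIV C y)) * Re (cinner y y)"
    using norm by (metis mult.assoc mult.commute mult_1_right)
  also have "\<dots> \<le> Re (qform UNIV C x) * Re (cinner y y)"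
  proof (rule mult_right_mono)
    show "r\<^sup>2 * Re (qform UNIV C y) \<le> Re (qform UNIV C x)"
      using x_max[rule_format, OF conjI[OF r(2)]] assms
      by (simp add: sform_scale_left sform_scale_right cinner_scale_left power2_eq_square flip: of_real_mult)
  qed (simp add: cinner_self sum_nonneg)
  finally show ?thesis .
qed

private lemma sform_max_orth:
  assumes w: "cinner w x = 0" "\<forall>k<m. cinner w (v k) = 0"
  shows "sform UNIV C x w = 0"
proof -
  define b where "b = sform UNIV C x w"
  define M where "M = Re (qform UNIV C x)"
  have wx: "sform UNIV C w x = cnj b"
    unfolding b_def cinner_mat_vec_eq_sform[symmetric] mat_vec_self_adjoint[OF herm] cinner_cnj ..
  have "0 \<le> t * - ((Re b)\<^sup>2 + (Im b)\<^sup>2)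
      + t\<^sup>2 * (((Re b)\<^sup>2 + (Im b)\<^sup>2) / 4 * (M * Re (cinner w w) - Re (qform UNIV C w)))"
    for t :: real
  proof -
    define c where "c = of_real (t / 2) * b"
    define y where "y = (\<lambda>i. x i + c * w i)"
    have "cinner x w = 0" using w(1) cinner_cnj[of w x] by simp
    then have yy: "cinner y y = 1 + c * cnj c * cinner w w"
      unfolding y_def using x_unit w(1)
      by (simp add: cinner_add_left cinner_add_right cinner_scale_left cinner_scale_right algebra_simps)
    have qy: "qform UNIV C y = qform UNIV C x + c * cnj b + cnj c * b + c * cnj c * qform UNIV C w"
      unfolding y_def qform_add_scaled wx b_def ..
    have "\<forall>k<m. cinner y (v k) = 0"
      unfolding y_def using x_orth w by (simp add: cinner_add_left cinner_scale_left)
    then have "Re (qform UNIV C y) \<le> M * Re (cinner y y)"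
      unfolding M_def by (rule qform_le_max)
    then show ?thesis unfolding yy qy c_def M_def
      by (simp add: power2_eq_square algebra_simps; linarith)
  qed
  then have "- ((Re b)\<^sup>2 + (Im b)\<^sup>2) = 0" by (rule nonneg_quadratic_imp_linear_zero)
  then show ?thesis
    unfolding b_def neg_equal_0_iff_equal sum_power2_eq_zero_iff by (simp add: complex_eq_iff)
qed

lemma max_is_eigenvector: "mat_vec C x = (\<lambda>i. qform UNIV C x * x i)"
proof -
  define \<mu> where "\<mu> = qform UNIV C x"
  define r where "r = (\<lambda>i. mat_vec C x i - \<mu> * x i)"
  have Cx: "cinner (mat_vec C x) y = sform UNIV C x y" for y by (rule cinner_mat_vec_eq_sform)
  have r_x: "cinner r x = 0" unfolding r_def cinner_diff_left cinner_scale_left x_unit \<mu>_def Cx by simp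
  have "cinner (mat_vec C x) (v k) = 0" if "k < m" for k
    unfolding mat_vec_self_adjoint[OF herm] using eig x_orth that by (simp add: cinner_scale_right)
  then have r_v: "\<forall>k<m. cinner r (v k) = 0"
    unfolding r_def cinner_diff_left cinner_scale_left using x_orth by simp
  have "cinner r r = cinner (mat_vec C x) r - \<mu> * cinner x r"
    unfolding r_def[of] cinner_diff_left cinner_scale_left by (simp add: r_def[symmetric])
  also have "\<dots> = 0"
    unfolding Cx sform_max_orth[OF r_x r_v] using r_x cinner_cnj[of r x] by simp
  finally have "r = (\<lambda>i. 0)" using cinner_self_eq_0_iff by blast
  then show ?thesis unfolding \<mu>_def[symmetric] r_def by (metis eq_iff_diff_eq_0)
qed

end

lemma eigenbasis_exists:
  fixes C :: "'a::finite \<Rightarrow> 'a \<Rightarrow> complex"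
  assumes herm: "herm_on UNIV C" and "m \<le> CARD('a)"
  shows "\<exists>v lam. orthonormal v m \<and> (\<forall>k<m. mat_vec C (v k) = (\<lambda>i. of_real (lam k) * v k i))"
  using assms(2)
proof (induction m)
  case 0
  then show ?case by (auto simp: orthonormal_def)
next
  case (Suc m)
  then obtain v lam where on: "orthonormal v m"
    and eig: "\<forall>k<m. mat_vec C (v k) = (\<lambda>i. of_real (lam k) * v k i)"
    by auto
  obtain x where x: "cinner x x = 1" "\<forall>k<m. cinner x (v k) = 0"
    and x_max: "\<forall>y. cinner y y = 1 \<and> (\<forall>k<m. cinner y (v k) = 0) \<longrightarrow>
          Re (qform UNIV C y) \<le> Re (qform UNIV C x)"
    using qform_max_on_orth_compl_exists[OF orthonormal_extend_exists[OF on], of C] Suc(2) by auto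
  define \<mu> where "\<mu> = Re (qform UNIV C x)"
  have "qform UNIV C x = of_real \<mu>"
    using qform_real_if_herm[OF herm, of x] unfolding \<mu>_def by (simp add: complex_eq_iff)
  then have "mat_vec C x = (\<lambda>i. of_real \<mu> * x i)"
    using max_is_eigenvector[OF herm eig x x_max] by simp
  then have "\<forall>k<Suc m. mat_vec C ((v(m := x)) k) = (\<lambda>i. of_real ((lam(m := \<mu>)) k) * (v(m := x)) k i)"
    using eig by (simp add: less_Suc_eq)
  moreover have "cinner (v k) x = 0" if "k < m" for k
    using x(2) that cinner_cnj[of x "v k"] by simp
  then have "orthonormal (v(m := x)) (Suc m)"
    using on x unfolding orthonormal_def by (auto simp: less_Suc_eq)
  ultimately show ?case by blast
qed

lemma spectral_decomposition:
  fixes C :: "'a::finite \<Rightarrow> 'a \<Rightarrow> complex"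
  assumes herm: "herm_on UNIV C"
  obtains v lam where "orthonormal v CARD('a)"
    "C = (\<lambda>i j. \<Sum>k<CARD('a). of_real (lam k) * v k i * cnj (v k j))"
proof -
  obtain v lam where on: "orthonormal v CARD('a)"
    and eig: "\<forall>k<CARD('a). mat_vec C (v k) = (\<lambda>i. of_real (lam k) * v k i)"
    using eigenbasis_exists[OF herm order.refl] by blast
  have "C i j = (\<Sum>k<CARD('a). of_real (lam k) * v k i * cnj (v k j))" for i j
  proof -
    have "C i j = (\<Sum>l\<in>UNIV. C i l * (\<Sum>k<CARD('a). cnj (v k j) * v k l))"
      unfolding orthonormal_complete[OF on] by (simp add: sum_mult_unit_vec)
    also have "\<dots> = (\<Sum>k<CARD('a). cnj (v k j) * mat_vec C (v k) i)"
      unfolding mat_vec_def by (simp add: sum_distrib_left mult_ac) (rule sum.swap)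
    finally show ?thesis using eig by (simp add: mult_ac)
  qed
  then show ?thesis using on that by blast
qed

section \<open>The positive part of a Hermitian matrix\<close>

lemma mat_vec_outer_sum:
  "mat_vec (\<lambda>i j. \<Sum>k<n. c k * v k i * cnj (v k j)) u = (\<lambda>i. \<Sum>k<n. (c k * cinner u (v k)) * v k i)"
  unfolding mat_vec_def cinner_def
  by (rule ext) (simp add: sum_distrib_left sum_distrib_right mult_ac sum.swap[of _ UNIV])

lemma cinner_orthonormal_combinations:
  assumes "orthonormal v n"
  shows "cinner (\<lambda>i. \<Sum>k<n. \<alpha> k * v k i) (\<lambda>i. \<Sum>l<n. \<beta> l * v l i) = (\<Sum>k<n. \<alpha> k * cnj (\<beta> k))"
proof -
  have "(\<Sum>l<n. cnj (\<beta> l) * cinner (v k) (v l)) = (\<Sum>l<n. if l = k then cnj (\<beta> k) else 0)"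
    if "k < n" for k
    using assms that unfolding orthonormal_def by (intro sum.cong refl) auto
  then show ?thesis unfolding cinner_sum_left cinner_sum_right by simp
qed

lemma psd_outer_sum:
  assumes "\<And>k. 0 \<le> p k"
  shows "psd (\<lambda>i j. \<Sum>k<n. of_real (p k) * v k i * cnj (v k j))"
proof -
  have "cinner (mat_vec (\<lambda>i j. \<Sum>k<n. of_real (p k) * v k i * cnj (v k j)) u) u =
      of_real (\<Sum>k<n. p k * (cmod (cinner u (v k)))\<^sup>2)" for u
    unfolding mat_vec_outer_sum cinner_sum_left of_real_sum of_real_mult complex_norm_square
    by (intro sum.cong refl) (simp only: cinner_cnj[symmetric, of u] mult.assoc complex_cnj_cnj)
  then show ?thesis unfolding psd_def using assms by (simp add: sum_nonneg)
qed

definition is_pos_part :: "('a::finite \<Rightarrow> 'a \<Rightarrow> complex) \<Rightarrow> ('a \<Rightarrow> 'a \<Rightarrow> complex) \<Rightarrow> bool" where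
  "is_pos_part C P \<longleftrightarrow> (let N = (\<lambda>i j. P i j - C i j) in
       psd P \<and> psd N \<and> (\<forall>u v. cinner (mat_vec P u) (mat_vec N v) = 0))"

lemma pos_part_eq_The: "pos_part C = (THE P. is_pos_part C P)"
  unfolding pos_part_def is_pos_part_def ..

lemma is_pos_part_exists:
  fixes C :: "'a::finite \<Rightarrow> 'a \<Rightarrow> complex"
  assumes "herm_on UNIV C"
  shows "\<exists>P. is_pos_part C P"
proof -
  obtain v lam where on: "orthonormal v CARD('a)"
    and C: "C = (\<lambda>i j. \<Sum>k<CARD('a). of_real (lam k) * v k i * cnj (v k j))"
    using spectral_decomposition[OF assms] by blast
  define P where "P = (\<lambda>i j. \<Sum>k<CARD('a). of_real (max (lam k) 0) * v k i * cnj (v k j))"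
  define N where "N = (\<lambda>i j. \<Sum>k<CARD('a). of_real (max (- lam k) 0) * v k i * cnj (v k j))"
  have "of_real (max l 0) * a * b - of_real l * a * b = of_real (max (- l) 0) * a * b"
    for l :: real and a b :: complex
    by (cases "0 \<le> l") (simp_all add: algebra_simps)
  then have "(\<lambda>i j. P i j - C i j) = N"
    unfolding P_def N_def C by (simp add: sum_subtractf[symmetric])
  moreover have "psd P" "psd N" unfolding P_def N_def by (simp_all add: psd_outer_sum)
  moreover have "cinner (mat_vec P u) (mat_vec N w) = 0" for u w
    unfolding P_def N_def mat_vec_outer_sum cinner_orthonormal_combinations[OF on]
    by (rule sum.neutral) (simp add: max_def)
  ultimately show ?thesis unfolding is_pos_part_def Let_def by blast
qed

lemma trace_prod_orth_ranges:
  fixes P N :: "'a::finite \<Rightarrow> 'a \<Rightarrow> complex"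
  assumes "herm_on UNIV N" "\<forall>u w. cinner (mat_vec P u) (mat_vec N w) = 0"
  shows "trace_prod UNIV P N = 0"
proof -
  have col: "mat_vec A (unit_vec a) = (\<lambda>i. A i a)" for A :: "'a \<Rightarrow> 'a \<Rightarrow> complex" and a
    unfolding mat_vec_def by (simp add: sum_mult_unit_vec)
  have "cnj (N i j) = N j i" for i j using herm_on_cnj[OF assms(1)] by simp
  then have "trace_prod UNIV P N = (\<Sum>j\<in>UNIV. cinner (mat_vec P (unit_vec j)) (mat_vec N (unit_vec j)))"
    unfolding trace_prod_def col cinner_def by (subst sum.swap) simp
  also have "\<dots> = 0" using assms(2) by simp
  finally show ?thesis .
qed

lemma herm_on_trace_square_nonpos_imp_zero:
  fixes X :: "'a::finite \<Rightarrow> 'a \<Rightarrow> complex"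
  assumes "herm_on UNIV X" "Re (trace_prod UNIV X X) \<le> 0"
  shows "X = (\<lambda>i j. 0)"
proof -
  have "cnj (X i j) = X j i" for i j using herm_on_cnj[OF assms(1)] by simp
  then have "trace_prod UNIV X X = (\<Sum>i\<in>UNIV. cinner (X i) (X i))"
    unfolding trace_prod_def cinner_def by simp
  then have "(\<Sum>i\<in>UNIV. Re (cinner (X i) (X i))) \<le> 0" using assms(2) by simp
  moreover have nonneg: "0 \<le> Re (cinner (X i) (X i))" for i by (simp add: cinner_self sum_nonneg)
  ultimately have "(\<Sum>i\<in>UNIV. Re (cinner (X i) (X i))) = 0" by (simp add: order_antisym sum_nonneg)
  then have "Re (cinner (X i) (X i)) = 0" for i by (simp add: sum_nonneg_eq_0_iff nonneg)
  then have "X i = (\<lambda>j. 0)" for i by (simp add: cinner_self_eq_0_iff[symmetric] cinner_self)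
  then show ?thesis by (simp add: fun_eq_iff)
qed

lemma is_pos_part_unique:
  fixes C :: "'a::finite \<Rightarrow> 'a \<Rightarrow> complex"
  assumes "is_pos_part C P1" "is_pos_part C P2"
  shows "P1 = P2"
proof -
  define N1 where "N1 = (\<lambda>i j. P1 i j - C i j)"
  define N2 where "N2 = (\<lambda>i j. P2 i j - C i j)"
  have 1: "psd P1" "psd N1" "\<forall>u v. cinner (mat_vec P1 u) (mat_vec N1 v) = 0"
    using assms(1) unfolding is_pos_part_def Let_def N1_def by auto
  have 2: "psd P2" "psd N2" "\<forall>u v. cinner (mat_vec P2 u) (mat_vec N2 v) = 0"
    using assms(2) unfolding is_pos_part_def Let_def N2_def by auto
  define X where "X = (\<lambda>i j. P1 i j - P2 i j)"
  have X_N: "X = (\<lambda>i j. N1 i j - N2 i j)" unfolding X_def N1_def N2_def by simp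
  have herm: "herm_on UNIV X"
    unfolding X_def by (rule herm_on_diff[OF psd_imp_herm_on[OF 1(1)] psd_imp_herm_on[OF 2(1)]])
  have "trace_prod UNIV X X = trace_prod UNIV X (\<lambda>i j. N1 i j - N2 i j)" by (subst (2) X_N) (rule refl)
  also have "\<dots> = trace_prod UNIV P1 N1 - trace_prod UNIV P1 N2 - (trace_prod UNIV P2 N1 - trace_prod UNIV P2 N2)"
    unfolding X_def trace_prod_diff_left trace_prod_diff_right ..
  also have "\<dots> = - trace_prod UNIV P1 N2 - trace_prod UNIV P2 N1"
    using trace_prod_orth_ranges[OF psd_imp_herm_on[OF 1(2)] 1(3)]
      trace_prod_orth_ranges[OF psd_imp_herm_on[OF 2(2)] 2(3)] by simp
  finally have "trace_prod UNIV X X = - trace_prod UNIV P1 N2 - trace_prod UNIV P2 N1" .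
  moreover have "0 \<le> Re (trace_prod UNIV P1 N2)"
    using trace_prod_psd_on[of UNIV P1 N2] 1 2 unfolding psd_iff_psd_on_UNIV by simp
  moreover have "0 \<le> Re (trace_prod UNIV P2 N1)"
    using trace_prod_psd_on[of UNIV P2 N1] 1 2 unfolding psd_iff_psd_on_UNIV by simp
  ultimately have "Re (trace_prod UNIV X X) \<le> 0" by simp
  then have "X = (\<lambda>i j. 0)" by (rule herm_on_trace_square_nonpos_imp_zero[OF herm])
  then have "P1 i j - P2 i j = 0" for i j unfolding X_def by (rule fun_cong[OF fun_cong])
  then show ?thesis by (simp add: fun_eq_iff)
qed

lemma pos_part_is_pos_part:
  fixes C :: "'a::finite \<Rightarrow> 'a \<Rightarrow> complex"
  assumes "herm_on UNIV C"
  shows "is_pos_part C (pos_part C)"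
proof -
  obtain P where P: "is_pos_part C P" using is_pos_part_exists[OF assms] by blast
  have "\<exists>!P. is_pos_part C P" by (rule ex1I[of "is_pos_part C", OF P]) (rule is_pos_part_unique[OF _ P])
  then show ?thesis unfolding pos_part_eq_The by (rule theI')
qed

section \<open>Choi matrices and \<open>k\<close>-positivity\<close>

lemma clinear_map_add: "clinear_map \<phi> \<Longrightarrow> \<phi> (\<lambda>i j. A i j + B i j) = (\<lambda>a b. \<phi> A a b + \<phi> B a b)"
  unfolding clinear_map_def by blast

lemma clinear_map_scale: "clinear_map \<phi> \<Longrightarrow> \<phi> (\<lambda>i j. c * A i j) = (\<lambda>a b. c * \<phi> A a b)"
  unfolding clinear_map_def by blast

lemma clinear_map_sum:
  assumes lin: "clinear_map \<phi>" and "finite K"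
  shows "\<phi> (\<lambda>i j. \<Sum>k\<in>K. f k i j) = (\<lambda>a b. \<Sum>k\<in>K. \<phi> (f k) a b)"
  using assms(2)
proof (induction K rule: finite_induct)
  case empty
  show ?case using clinear_map_scale[OF lin, of 0 "\<lambda>i j. 0"] by simp
next
  case (insert x F)
  then show ?case using clinear_map_add[OF lin, of "f x" "\<lambda>i j. \<Sum>k\<in>F. f k i j"] by simp
qed

lemma matrix_expansion: "(M :: 'a::finite \<Rightarrow> 'a \<Rightarrow> complex) = (\<lambda>r s. \<Sum>i\<in>UNIV. \<Sum>j\<in>UNIV. M i j * mat_unit i j r s)"
proof (intro ext)
  fix r s :: 'a
  have "(\<Sum>i\<in>UNIV. \<Sum>j\<in>UNIV. M i j * mat_unit i j r s) = (\<Sum>i\<in>UNIV. \<Sum>j\<in>UNIV. M i j * unit_vec r i * unit_vec s j)"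
    unfolding mat_unit_def unit_vec_def by (intro sum.cong refl) auto
  also have "\<dots> = M r s" by (simp add: sum_mult_unit_vec)
  finally show "M r s = (\<Sum>i\<in>UNIV. \<Sum>j\<in>UNIV. M i j * mat_unit i j r s)" by simp
qed

lemma choi_expansion:
  fixes \<phi> :: "('k::finite \<Rightarrow> 'k \<Rightarrow> complex) \<Rightarrow> ('h \<Rightarrow> 'h \<Rightarrow> complex)"
  assumes lin: "clinear_map \<phi>"
  shows "\<phi> M a b = (\<Sum>i\<in>UNIV. \<Sum>j\<in>UNIV. M i j * choi \<phi> (i, a) (j, b))"
proof -
  have "\<phi> M = \<phi> (\<lambda>r s. \<Sum>i\<in>UNIV. \<Sum>j\<in>UNIV. M i j * mat_unit i j r s)"
    by (rule arg_cong[OF matrix_expansion])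
  also have "\<dots> = (\<lambda>a b. \<Sum>i\<in>UNIV. \<Sum>j\<in>UNIV. \<phi> (\<lambda>r s. M i j * mat_unit i j r s) a b)"
    by (simp add: clinear_map_sum[OF lin])
  also have "\<dots> = (\<lambda>a b. \<Sum>i\<in>UNIV. \<Sum>j\<in>UNIV. M i j * \<phi> (mat_unit i j) a b)"
    by (simp add: clinear_map_scale[OF lin])
  finally show ?thesis unfolding choi_def by simp
qed

lemma choi_herm_on:
  fixes \<phi> :: "('k::finite \<Rightarrow> 'k \<Rightarrow> complex) \<Rightarrow> ('h::finite \<Rightarrow> 'h \<Rightarrow> complex)"
  assumes lin: "clinear_map \<phi>" and pos: "positive_map \<phi>"
  shows "herm_on UNIV (choi \<phi>)"
proof -
  define D where "D = (\<lambda>a b i j. choi \<phi> (i, a) (j, b))"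
  have \<phi>_outer: "\<phi> (\<lambda>r s. cnj (g r) * g s) a b = qform UNIV (D a b) g" for g a b
    unfolding D_def sform_def by (subst choi_expansion[OF lin]) (simp only: mult_ac complex_cnj_cnj)
  have psd_outer: "psd (\<phi> (\<lambda>r s. cnj (g r) * g s))" for g
    using pos psd_on_outer[of UNIV "\<lambda>r. cnj (g r)"] unfolding positive_map_def psd_iff_psd_on_UNIV by simp
  have herm_outer: "\<phi> (\<lambda>r s. cnj (g r) * g s) b a = cnj (\<phi> (\<lambda>r s. cnj (g r) * g s) a b)" for g a b
    using psd_imp_herm_on[OF psd_outer[of g]] unfolding herm_on_def by blast
  have "qform UNIV (\<lambda>i j. D b a i j - cnj (D a b j i)) g = 0" for g a b
    using herm_outer[of g a b] unfolding sform_diff_matrix sform_swap_adjoint \<phi>_outer[symmetric] by simp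
  then have D: "D b a i j - cnj (D a b j i) = 0" for a b i j
    by (rule matrix_eq_0_if_qform_eq_0[where A = "\<lambda>i j. D b a i j - cnj (D a b j i)", OF finite_class.finite_UNIV UNIV_I UNIV_I])
  show ?thesis
    unfolding herm_on_def
  proof (intro ballI)
    fix x y :: "'k \<times> 'h"
    show "choi \<phi> y x = cnj (choi \<phi> x y)"
      using D[where a = "snd x" and b = "snd y" and i = "fst y" and j = "fst x"] unfolding D_def by simp
  qed
qed

lemma tensor_id_choi:
  fixes \<phi> :: "('k::finite \<Rightarrow> 'k \<Rightarrow> complex) \<Rightarrow> ('h \<Rightarrow> 'h \<Rightarrow> complex)"
  assumes lin: "clinear_map \<phi>"
  shows "tensor_id \<phi> A (a, p) (b, q) = (\<Sum>i\<in>UNIV. \<Sum>j\<in>UNIV. A (i, p) (j, q) * choi \<phi> (i, a) (j, b))"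
  unfolding tensor_id_def by (simp only: prod.case) (rule choi_expansion[OF lin])

lemma sum_Times: "(\<Sum>z\<in>A \<times> B. g z) = (\<Sum>x\<in>A. \<Sum>y\<in>B. g (x, y))"
  by (simp add: sum.cartesian_product)

lemmas sum_UNIV_prod = sum_Times[where A = UNIV and B = UNIV, unfolded UNIV_Times_UNIV]

lemma qform_tensor_outer_eq_qform_schmidt:
  fixes C :: "('k::finite \<times> 'h::finite) \<Rightarrow> ('k \<times> 'h) \<Rightarrow> complex"
    and x :: "nat \<Rightarrow> 'k \<Rightarrow> complex" and y :: "nat \<Rightarrow> 'h \<Rightarrow> complex"
  shows "qform (UNIV \<times> {..<k}) (\<lambda>(a, p) (b, q). \<Sum>i\<in>UNIV. \<Sum>j\<in>UNIV. cnj (x p i) * x q j * C (i, a) (j, b))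
      (\<lambda>(b, q). y q b)
     = qform UNIV C (\<lambda>(i, a). \<Sum>p<k. x p i * y p a)"
  unfolding sform_def sum_Times sum_UNIV_prod
  by (simp add: sum_distrib_left sum_distrib_right,
      simp only: sum.swap[where A = "UNIV :: 'h set" and B = "{..<k}"]
        sum.swap[where A = "UNIV :: 'k set" and B = "{..<k}"]
        sum.swap[where A = "UNIV :: 'h set" and B = "UNIV :: 'k set"],
      simp add: mult_ac)

lemma qform_tensor_eq_trace_prod:
  fixes C :: "('k::finite \<times> 'h::finite) \<Rightarrow> ('k \<times> 'h) \<Rightarrow> complex"
    and A :: "('k \<times> nat) \<Rightarrow> ('k \<times> nat) \<Rightarrow> complex" and w :: "'h \<times> nat \<Rightarrow> complex"
  shows "qform (UNIV \<times> {..<k}) (\<lambda>(a, p) (b, q). \<Sum>i\<in>UNIV. \<Sum>j\<in>UNIV. A (i, p) (j, q) * C (i, a) (j, b)) w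
     = trace_prod (UNIV \<times> {..<k}) A
         (\<lambda>(j, q) (i, p). \<Sum>a\<in>UNIV. \<Sum>b\<in>UNIV. C (i, a) (j, b) * w (b, q) * cnj (w (a, p)))"
  unfolding sform_def trace_prod_def sum_Times
  by (simp add: sum_distrib_left sum_distrib_right,
      simp only: sum.swap[where A = "UNIV :: 'h set" and B = "{..<k}"]
        sum.swap[where A = "UNIV :: 'k set" and B = "{..<k}"]
        sum.swap[where A = "UNIV :: 'h set" and B = "UNIV :: 'k set"],
      simp add: mult_ac)

lemma qform_partial_eq_qform_schmidt:
  fixes C :: "('k::finite \<times> 'h::finite) \<Rightarrow> ('k \<times> 'h) \<Rightarrow> complex"
    and u :: "('k \<times> nat) \<Rightarrow> complex" and w :: "'h \<times> nat \<Rightarrow> complex"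
  shows "qform (UNIV \<times> {..<k})
      (\<lambda>(j, q) (i, p). \<Sum>a\<in>UNIV. \<Sum>b\<in>UNIV. C (i, a) (j, b) * w (b, q) * cnj (w (a, p))) u
     = qform UNIV C (\<lambda>(j, b). \<Sum>q<k. cnj (u (j, q)) * w (b, q))"
  unfolding sform_def
  by (subst sum.swap[where A = "UNIV \<times> {..<k}"], unfold sum_Times sum_UNIV_prod,
      simp add: sum_distrib_left sum_distrib_right cnj_sum,
      simp only: sum.swap[where A = "UNIV :: 'h set" and B = "{..<k}"]
        sum.swap[where A = "UNIV :: 'k set" and B = "{..<k}"]
        sum.swap[where A = "UNIV :: 'h set" and B = "UNIV :: 'k set"],
      simp add: mult_ac)

lemma k_positive_imp_choi_schmidt_nonneg:
  fixes \<phi> :: "('k::finite \<Rightarrow> 'k \<Rightarrow> complex) \<Rightarrow> ('h::finite \<Rightarrow> 'h \<Rightarrow> complex)"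
    and x :: "nat \<Rightarrow> 'k \<Rightarrow> complex" and y :: "nat \<Rightarrow> 'h \<Rightarrow> complex"
  assumes lin: "clinear_map \<phi>" and kpos: "k_positive k \<phi>"
  shows "0 \<le> Re (qform UNIV (choi \<phi>) (\<lambda>(i, a). \<Sum>p<k. x p i * y p a))"
proof -
  define f where "f = (\<lambda>(i, p). cnj (x p i))"
  define A where "A = (\<lambda>\<alpha> \<beta>. f \<alpha> * cnj (f \<beta>))"
  have "psd_on (UNIV \<times> {..<k}) A" unfolding A_def by (rule psd_on_outer)
  then have "psd_on (UNIV \<times> {..<k}) (tensor_id \<phi> A)" using kpos unfolding k_positive_def by blast
  moreover have "tensor_id \<phi> A = (\<lambda>(a, p) (b, q). \<Sum>i\<in>UNIV. \<Sum>j\<in>UNIV. cnj (x p i) * x q j * choi \<phi> (i, a) (j, b))"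
    by (simp add: fun_eq_iff tensor_id_choi[OF lin] A_def f_def)
  ultimately show ?thesis
    unfolding psd_on_iff_qform qform_tensor_outer_eq_qform_schmidt[symmetric] by metis
qed

lemma k_positive_if_choi_schmidt_nonneg:
  fixes \<phi> :: "('k::finite \<Rightarrow> 'k \<Rightarrow> complex) \<Rightarrow> ('h::finite \<Rightarrow> 'h \<Rightarrow> complex)"
  assumes lin: "clinear_map \<phi>" and herm: "herm_on UNIV (choi \<phi>)"
    and nonneg: "\<And>(x :: nat \<Rightarrow> 'k \<Rightarrow> complex) (y :: nat \<Rightarrow> 'h \<Rightarrow> complex).
      0 \<le> Re (qform UNIV (choi \<phi>) (\<lambda>(i, a). \<Sum>p<k. x p i * y p a))"
  shows "k_positive k \<phi>"
  unfolding k_positive_def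
proof (intro allI impI)
  fix A :: "'k \<times> nat \<Rightarrow> 'k \<times> nat \<Rightarrow> complex"
  assume A: "psd_on (UNIV \<times> {..<k}) A"
  show "psd_on (UNIV \<times> {..<k}) (tensor_id \<phi> A)"
    unfolding psd_on_iff_qform
  proof
    fix w :: "'h \<times> nat \<Rightarrow> complex"
    define G where "G = (\<lambda>(j, q) (i, p). \<Sum>a\<in>UNIV. \<Sum>b\<in>UNIV. choi \<phi> (i, a) (j, b) * w (b, q) * cnj (w (a, p)))"
    have "tensor_id \<phi> A = (\<lambda>(a, p) (b, q). \<Sum>i\<in>UNIV. \<Sum>j\<in>UNIV. A (i, p) (j, q) * choi \<phi> (i, a) (j, b))"
      by (simp add: fun_eq_iff tensor_id_choi[OF lin])
    then have eq: "qform (UNIV \<times> {..<k}) (tensor_id \<phi> A) w = trace_prod (UNIV \<times> {..<k}) A G"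
      unfolding G_def by (simp add: qform_tensor_eq_trace_prod)
    have "psd_on (UNIV \<times> {..<k}) G"
      unfolding psd_on_iff_qform G_def qform_partial_eq_qform_schmidt
      using nonneg[of "\<lambda>q j. cnj (u (j, q))" "\<lambda>q b. w (b, q)" for u] qform_real_if_herm[OF herm]
      by simp
    then show "Im (qform (UNIV \<times> {..<k}) (tensor_id \<phi> A) w) = 0 \<and>
        0 \<le> Re (qform (UNIV \<times> {..<k}) (tensor_id \<phi> A) w)"
      unfolding eq by (intro trace_prod_psd_on A) simp
  qed
qed

lemma k_positive_iff_choi_schmidt_nonneg:
  fixes \<phi> :: "('k::finite \<Rightarrow> 'k \<Rightarrow> complex) \<Rightarrow> ('h::finite \<Rightarrow> 'h \<Rightarrow> complex)"
  assumes lin: "clinear_map \<phi>" and pos: "positive_map \<phi>"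
  shows "k_positive k \<phi> \<longleftrightarrow> (\<forall>v\<in>schmidt k. 0 \<le> Re (qform UNIV (choi \<phi>) v))"
proof
  assume "k_positive k \<phi>"
  then show "\<forall>v\<in>schmidt k. 0 \<le> Re (qform UNIV (choi \<phi>) v)"
    unfolding schmidt_def using k_positive_imp_choi_schmidt_nonneg[OF lin] by blast
next
  assume "\<forall>v\<in>schmidt k. 0 \<le> Re (qform UNIV (choi \<phi>) v)"
  then show "k_positive k \<phi>"
    by (intro k_positive_if_choi_schmidt_nonneg[OF lin choi_herm_on[OF lin pos]]) (auto simp: schmidt_def)
qed

lemma schmidt_scale:
  assumes "v \<in> schmidt k"
  shows "(\<lambda>z. c * v z) \<in> schmidt k"
proof -
  obtain x y where "v = (\<lambda>(a, b). \<Sum>i<k. x i a * y i b)" using assms unfolding schmidt_def by blast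
  then have "(\<lambda>z. c * v z) = (\<lambda>(a, b). \<Sum>i<k. (c * x i a) * y i b)"
    by (auto simp: sum_distrib_left mult.assoc)
  then show ?thesis unfolding schmidt_def by (intro CollectI exI[where x = "\<lambda>i a. c * x i a"] exI[where x = y])
qed

lemma schmidt_nonneg_iff_unit_nonneg:
  fixes C :: "('k::finite \<times> 'h::finite) \<Rightarrow> ('k \<times> 'h) \<Rightarrow> complex"
  shows "(\<forall>v\<in>schmidt k. 0 \<le> Re (qform UNIV C v)) \<longleftrightarrow>
    (\<forall>v\<in>schmidt k. vnorm v = 1 \<longrightarrow> 0 \<le> Re (qform UNIV C v))"
proof (intro iffI ballI impI)
  fix v :: "'k \<times> 'h \<Rightarrow> complex"
  assume unit: "\<forall>v\<in>schmidt k. vnorm v = 1 \<longrightarrow> 0 \<le> Re (qform UNIV C v)" and v: "v \<in> schmidt k"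
  show "0 \<le> Re (qform UNIV C v)"
  proof (cases "v = (\<lambda>z. 0)")
    case True
    then show ?thesis by (simp add: sform_def)
  next
    case False
    then obtain r where r: "r > 0" "cinner (\<lambda>z. of_real r * v z) (\<lambda>z. of_real r * v z) = 1"
      by (rule nonzero_unit_multiple)
    then have "0 \<le> Re (qform UNIV C (\<lambda>z. of_real r * v z))"
      using unit schmidt_scale[OF v] unfolding vnorm_eq_1_iff by blast
    then show ?thesis using r(1)
      by (simp add: sform_scale_left sform_scale_right zero_le_mult_iff flip: of_real_mult)
  qed
qed auto

lemma vnorm_unit_vec: "vnorm (unit_vec (z :: 'a::finite)) = 1"
  unfolding vnorm_eq_1_iff cinner_unit_vec_right by (simp add: unit_vec_def)

lemma unit_vec_in_schmidt:
  assumes "k \<ge> 1"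
  shows "unit_vec (a, b) \<in> schmidt k"
proof -
  define y where "y = (\<lambda>(i::nat) b'. if i = 0 then unit_vec b b' else 0)"
  have "unit_vec (a, b) = (\<lambda>(a', b'). \<Sum>i<k. unit_vec a a' * y i b')"
    using assms by (auto simp: unit_vec_def y_def fun_eq_iff if_distrib cong: if_cong)
  then show ?thesis unfolding schmidt_def by (intro CollectI exI[where x = "\<lambda>i. unit_vec a"] exI[where x = y])
qed

lemma cmod_le_1_if_vnorm_eq_1:
  assumes "vnorm v = 1"
  shows "cmod (v i) \<le> 1"
proof -
  have "(cmod (v i))\<^sup>2 \<le> (\<Sum>j\<in>UNIV. (cmod (v j))\<^sup>2)" by (rule member_le_sum) auto
  also have "\<dots> = 1" using assms unfolding vnorm_def by simp
  finally show ?thesis by (simp add: power_le_one_iff abs_le_iff)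
qed

lemma Re_qform_le_sum_cmod:
  fixes M :: "'a::finite \<Rightarrow> 'a \<Rightarrow> complex"
  assumes "vnorm v = 1"
  shows "Re (qform UNIV M v) \<le> (\<Sum>i\<in>UNIV. \<Sum>j\<in>UNIV. cmod (M i j))"
proof -
  have "Re (qform UNIV M v) \<le> (\<Sum>i\<in>UNIV. \<Sum>j\<in>UNIV. cmod (M i j * v j * cnj (v i)))"
    unfolding sform_def
    by (rule order_trans[OF complex_Re_le_cmod order_trans[OF norm_sum sum_mono]]) (rule norm_sum)
  also have "\<dots> \<le> (\<Sum>i\<in>UNIV. \<Sum>j\<in>UNIV. cmod (M i j))"
  proof -
    have "cmod (v j) * cmod (v i) \<le> 1" for i j
      using cmod_le_1_if_vnorm_eq_1[OF assms] by (intro mult_le_one) auto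
    then show ?thesis by (intro sum_mono) (simp add: norm_mult mult.assoc mult_left_le)
  qed
  finally show ?thesis .
qed

lemma vnorm_mat_vec_le_sum_cmod:
  fixes M :: "'a::finite \<Rightarrow> 'a \<Rightarrow> complex"
  assumes "vnorm v = 1"
  shows "vnorm (mat_vec M v) \<le> (\<Sum>i\<in>UNIV. \<Sum>j\<in>UNIV. cmod (M i j))"
proof -
  have "vnorm (mat_vec M v) \<le> (\<Sum>i\<in>UNIV. cmod (mat_vec M v i))"
    using L2_set_le_sum[of UNIV "\<lambda>i. cmod (mat_vec M v i)"] unfolding vnorm_def L2_set_def by simp
  also have "\<dots> \<le> (\<Sum>i\<in>UNIV. \<Sum>j\<in>UNIV. cmod (M i j * v j))"
    unfolding mat_vec_def by (intro sum_mono norm_sum)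
  also have "\<dots> \<le> (\<Sum>i\<in>UNIV. \<Sum>j\<in>UNIV. cmod (M i j))"
    using cmod_le_1_if_vnorm_eq_1[OF assms] by (intro sum_mono) (simp add: norm_mult mult_left_le)
  finally show ?thesis .
qed

lemma opnorm_pos:
  fixes P :: "'a::finite \<Rightarrow> 'a \<Rightarrow> complex"
  assumes "P \<noteq> (\<lambda>i j. 0)"
  shows "opnorm P > 0"
proof -
  obtain r s where rs: "P r s \<noteq> 0" using assms by (meson ext)
  have col: "mat_vec P (unit_vec s) = (\<lambda>i. P i s)"
    unfolding mat_vec_def by (simp add: sum_mult_unit_vec)
  have "0 < (cmod (P r s))\<^sup>2" using rs by simp
  also have "\<dots> \<le> (\<Sum>i\<in>UNIV. (cmod (P i s))\<^sup>2)" by (rule member_le_sum) auto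
  finally have "0 < vnorm (mat_vec P (unit_vec s))" unfolding col vnorm_def by simp
  also have "\<dots> \<le> opnorm P"
    unfolding opnorm_def
    by (rule cSUP_upper) (auto simp: vnorm_unit_vec intro!: bdd_aboveI2 vnorm_mat_vec_le_sum_cmod)
  finally show ?thesis .
qed

lemma choi_eq_0_imp_zero:
  fixes \<phi> :: "('k::finite \<Rightarrow> 'k \<Rightarrow> complex) \<Rightarrow> ('h \<Rightarrow> 'h \<Rightarrow> complex)"
  assumes "clinear_map \<phi>" "choi \<phi> = (\<lambda>x y. 0)"
  shows "\<phi> = (\<lambda>A a b. 0)"
  by (intro ext) (simp add: choi_expansion[OF assms(1)] assms(2))

lemma pos_part_choi_nonzero:
  fixes \<phi> :: "('k::finite \<Rightarrow> 'k \<Rightarrow> complex) \<Rightarrow> ('h::finite \<Rightarrow> 'h \<Rightarrow> complex)"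
  assumes lin: "clinear_map \<phi>" and pos: "positive_map \<phi>" and nz: "\<phi> \<noteq> (\<lambda>A a b. 0)"
  shows "pos_part (choi \<phi>) \<noteq> (\<lambda>i j. 0)"
proof
  let ?C = "choi \<phi>"
  assume "pos_part ?C = (\<lambda>i j. 0)"
  then have N: "psd_on UNIV (\<lambda>x y. 0 - ?C x y)"
    using pos_part_is_pos_part[OF choi_herm_on[OF lin pos]]
    unfolding is_pos_part_def Let_def psd_iff_psd_on_UNIV by simp
  have "psd_on UNIV (\<phi> (mat_unit i i))" for i
  proof -
    have "mat_unit i i = (\<lambda>r s. unit_vec i r * cnj (unit_vec i s))"
      by (simp add: mat_unit_def unit_vec_def fun_eq_iff)
    then show ?thesis
      using pos psd_on_outer[of UNIV "unit_vec i"] unfolding positive_map_def psd_iff_psd_on_UNIV by simp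
  qed
  then have C_diag: "Im (?C x x) = 0" "0 \<le> Re (?C x x)" for x
    using psd_on_diag[of UNIV "snd x"] unfolding choi_def by (simp_all add: case_prod_beta)
  have N_diag: "0 \<le> Re (0 - ?C x x)" for x using psd_on_diag[OF _ _ N, of x] by simp
  have "(\<lambda>x y. 0 - ?C x y) x x = 0" for x
    using C_diag[of x] N_diag[of x] by (simp add: complex_eq_iff)
  then have "0 - ?C y x = 0" for x y using psd_on_zero_diag(1)[OF _ _ _ N] by simp
  then have "\<phi> = (\<lambda>A a b. 0)" by (intro choi_eq_0_imp_zero[OF lin]) (simp add: fun_eq_iff)
  with nz show False ..
qed

lemma Re_choi_cp_form:
  fixes \<phi> :: "('k::finite \<Rightarrow> 'k \<Rightarrow> complex) \<Rightarrow> ('h::finite \<Rightarrow> 'h \<Rightarrow> complex)"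
  assumes "vnorm v = 1"
  shows "Re (cinner (mat_vec (choi_cp \<phi>) v) v) =
    1 - inverse (opnorm (pos_part (choi \<phi>))) * Re (qform UNIV (choi \<phi>) v)"
proof -
  define c where "c = inverse (opnorm (pos_part (choi \<phi>)))"
  have "choi_cp \<phi> x y = unit_vec x y - of_real c * choi \<phi> x y" for x y
    unfolding choi_cp_def c_def unit_vec_def by (simp add: eq_commute)
  then have "mat_vec (choi_cp \<phi>) v = (\<lambda>x. v x - of_real c * mat_vec (choi \<phi>) v x)"
    unfolding mat_vec_def
    by (simp add: left_diff_distrib sum_subtractf sum_distrib_left mult.assoc mult.commute[of "unit_vec _ _"]
        sum_mult_unit_vec)
  then show ?thesis
    using assms unfolding vnorm_eq_1_iff c_def[symmetric]
    by (simp add: cinner_diff_left cinner_scale_left cinner_mat_vec_eq_sform)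
qed

lemma k_positive_iff_choi_cp_sup_le_1:
  fixes \<phi> :: "('k::finite \<Rightarrow> 'k \<Rightarrow> complex) \<Rightarrow> ('h::finite \<Rightarrow> 'h \<Rightarrow> complex)"
  assumes lin: "clinear_map \<phi>" and pos: "positive_map \<phi>" and nz: "\<phi> \<noteq> (\<lambda>A a b. 0)"
    and k: "k \<ge> 1"
  shows "k_positive k \<phi> \<longleftrightarrow>
    (SUP v\<in>{v \<in> schmidt k. vnorm v = 1}. Re (cinner (mat_vec (choi_cp \<phi>) v) v)) \<le> 1"
proof -
  define U where "U = {v \<in> (schmidt k :: ('k \<times> 'h \<Rightarrow> complex) set). vnorm v = 1}"
  define f where "f = (\<lambda>v. Re (cinner (mat_vec (choi_cp \<phi>) v) v))"
  define c where "c = inverse (opnorm (pos_part (choi \<phi>)))"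
  have c: "c > 0"
    unfolding c_def using opnorm_pos[OF pos_part_choi_nonzero[OF lin pos nz]] by simp
  have "unit_vec (a0, b0) \<in> U" for a0 :: 'k and b0 :: 'h
    unfolding U_def using unit_vec_in_schmidt[OF k, of a0 b0] vnorm_unit_vec[of "(a0, b0)"] by simp
  then have "U \<noteq> {}" by blast
  moreover have "bdd_above (f ` U)"
    by (rule bdd_aboveI2[where M = "\<Sum>i\<in>UNIV. \<Sum>j\<in>UNIV. cmod (choi_cp \<phi> i j)"])
      (simp add: f_def U_def cinner_mat_vec_eq_sform Re_qform_le_sum_cmod)
  ultimately have "(SUP v\<in>U. f v) \<le> 1 \<longleftrightarrow> (\<forall>v\<in>U. f v \<le> 1)" by (rule cSUP_le_iff)
  also have "\<dots> \<longleftrightarrow> (\<forall>v\<in>U. 0 \<le> Re (qform UNIV (choi \<phi>) v))"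
  proof (rule ball_cong[OF refl])
    fix v assume "v \<in> U"
    then have "f v = 1 - c * Re (qform UNIV (choi \<phi>) v)"
      unfolding f_def U_def c_def by (simp add: Re_choi_cp_form)
    then show "f v \<le> 1 \<longleftrightarrow> 0 \<le> Re (qform UNIV (choi \<phi>) v)"
      using c by (simp add: zero_le_mult_iff)
  qed
  also have "\<dots> \<longleftrightarrow> k_positive k \<phi>"
    unfolding k_positive_iff_choi_schmidt_nonneg[OF lin pos] schmidt_nonneg_iff_unit_nonneg U_def
    by auto
  finally show ?thesis unfolding U_def f_def by (rule sym)
qed

lemma choi_null_schmidt_vector_in_kernel:
  fixes \<phi> :: "('k::finite \<Rightarrow> 'k \<Rightarrow> complex) \<Rightarrow> ('h::finite \<Rightarrow> 'h \<Rightarrow> complex)"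
    and x :: "nat \<Rightarrow> 'k \<Rightarrow> complex" and y :: "nat \<Rightarrow> 'h \<Rightarrow> complex"
  assumes lin: "clinear_map \<phi>" and pos: "positive_map \<phi>" and kpos: "k_positive (k + 1) \<phi>"
    and v: "v = (\<lambda>(a, b). \<Sum>i<k. x i a * y i b)" and null: "qform UNIV (choi \<phi>) v = 0"
  shows "mat_vec (choi \<phi>) v = (\<lambda>z. 0)"
proof
  fix z :: "'k \<times> 'h"
  let ?C = "choi \<phi>"
  obtain j0 b0 where z: "z = (j0, b0)" by (cases z)
  define w where "w = unit_vec z"
  define a where "a = sform UNIV ?C v w"
  have a: "a = mat_vec ?C v z"
    unfolding a_def w_def cinner_mat_vec_eq_sform[symmetric] cinner_unit_vec_right ..
  have "sform UNIV ?C w v = cinner w (mat_vec ?C v)"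
    unfolding cinner_mat_vec_eq_sform[symmetric] by (rule mat_vec_self_adjoint[OF choi_herm_on[OF lin pos]])
  then have wv: "sform UNIV ?C w v = cnj a"
    unfolding a_def cinner_mat_vec_eq_sform[symmetric] by (simp add: cinner_cnj)
  have "0 \<le> Re (qform UNIV ?C (\<lambda>i. v i + t * w i))" for t
  proof -
    have "(\<lambda>i. v i + t * w i) = (\<lambda>(a, b). \<Sum>i<k + 1. (x(k := (\<lambda>i. t * unit_vec j0 i))) i a * (y(k := unit_vec b0)) i b)"
      by (auto simp: v w_def z unit_vec_def fun_eq_iff)
    then show ?thesis by (simp only:) (rule k_positive_imp_choi_schmidt_nonneg[OF lin kpos])
  qed
  note perturbed = this
  have "0 \<le> s * (2 * Re a) + s\<^sup>2 * Re (qform UNIV ?C w)"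
       "0 \<le> s * (2 * Im a) + s\<^sup>2 * Re (qform UNIV ?C w)" for s :: real
    using perturbed[of "of_real s"] perturbed[of "\<i> * of_real s"]
    unfolding qform_add_scaled wv null a_def[symmetric]
    by (simp_all add: power2_eq_square algebra_simps)
  then have "Re a = 0" "Im a = 0"
    using nonneg_quadratic_imp_linear_zero[of "2 * Re a"] nonneg_quadratic_imp_linear_zero[of "2 * Im a"]
    by auto
  then show "mat_vec ?C v z = 0" using a by (simp add: complex_eq_iff)
qed

lemma zero_in_tensor_sub: "(\<lambda>z. 0) \<in> tensor_sub X Y"
  unfolding tensor_sub_def cspan_def by (intro CollectI exI[of _ "{}"]) auto

lemma not_k_positive_if_choi_null_outside_tensor_sub:
  fixes \<phi> :: "('k::finite \<Rightarrow> 'k \<Rightarrow> complex) \<Rightarrow> ('h::finite \<Rightarrow> 'h \<Rightarrow> complex)"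
    and x :: "nat \<Rightarrow> 'k \<Rightarrow> complex" and y :: "nat \<Rightarrow> 'h \<Rightarrow> complex"
  assumes lin: "clinear_map \<phi>" and pos: "positive_map \<phi>"
    and null: "cinner (mat_vec (choi \<phi>) (\<lambda>(a, b). \<Sum>i<k. x i a * y i b)) (\<lambda>(a, b). \<Sum>i<k. x i a * y i b) = 0"
    and outside: "mat_vec (choi \<phi>) (\<lambda>(a, b). \<Sum>i<k. x i a * y i b) \<notin> tensor_sub X Y"
  shows "\<not> k_positive (k + 1) \<phi>"
  using choi_null_schmidt_vector_in_kernel[OF lin pos _ refl] null outside zero_in_tensor_sub[of X Y]
  unfolding cinner_mat_vec_eq_sform by force

theorem theorem4:
  fixes \<phi> :: "('k::finite \<Rightarrow> 'k \<Rightarrow> complex) \<Rightarrow> ('h::finite \<Rightarrow> 'h \<Rightarrow> complex)"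
    and k :: nat
  assumes lin: "clinear_map \<phi>"
    and pos: "positive_map \<phi>"
    and k1: "k \<ge> 1"
  shows "(\<phi> \<noteq> (\<lambda>A a b. 0) \<longrightarrow>
           (k_positive k \<phi> \<longleftrightarrow>
              (SUP v\<in>{v \<in> schmidt k. vnorm v = 1}. Re (cinner (mat_vec (choi_cp \<phi>) v) v)) \<le> 1))
       \<and> (\<forall>(x :: nat \<Rightarrow> 'k \<Rightarrow> complex) (y :: nat \<Rightarrow> 'h \<Rightarrow> complex).
            let v = (\<lambda>(a, b). \<Sum>i<k. x i a * y i b) in
            k < min (card (UNIV :: 'k set)) (card (UNIV :: 'h set)) \<and> vnorm v = 1
            \<and> cinner (mat_vec (choi \<phi>) v) v = 0
            \<and> mat_vec (choi \<phi>) v \<notin> tensor_sub (cspan (x ` {..<k})) (cspan (y ` {..<k}))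
            \<longrightarrow> \<not> k_positive (k + 1) \<phi>)"
  unfolding Let_def
  using k_positive_iff_choi_cp_sup_le_1[OF lin pos _ k1]
    not_k_positive_if_choi_null_outside_tensor_sub[OF lin pos]
  by blast

end
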